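(* Let $u(t)=\sum_{i=1}^M s_i(t)e^{j2\pi f_it}$ be a signal in the class $\mathcal{M}_2$ described in the context, observed by the L-shaped array described in the context with $N$ sensors along each axis and spacing $d$. Define $\mathbf{R}_1=\mathbb{E}[\mathbf{x}_1\mathbf{z}_1^H]$, $\mathbf{R}_2=\mathbb{E}[\mathbf{x}_2\mathbf{z}_1^H]$, $\mathbf{R}_3=\mathbb{E}[\mathbf{x}_1\mathbf{z}_2^H]$ and $\mathbf{R}=[\mathbf{R}_1^T\ \mathbf{R}_2^T\ \mathbf{R}_3^T]^T\in\mathbb{C}^{3(N-1)\times(N-1)}$, and let $\mathbf{U}_1\in\mathbb{C}^{3(N-1)\times M}$ be the matrix of left singular vectors of $\mathbf{R}$ corresponding to its $M$ largest singular values. If (c1) $d\le\frac{c}{f_{\text{Nyq}}}$ and (c2) $N>M$, then there exists an invertible $M\times M$ matrix $\mathbf{T}$ such that $$\mathbf{U}_1=\begin{bmatrix}\mathbf{A}_{x_1}\\ \mathbf{A}_{x_1}\boldsymbol{\Phi}\\ \mathbf{A}_{x_1}\boldsymbol{\Psi}^H\end{bmatrix}\mathbf{T}.$$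
   Context: Class $\mathcal{M}_2$: $u$ is complex valued with Fourier transform supported in $[-f_{\text{Nyq}}/2,f_{\text{Nyq}}/2]$, each $s_i$ has Fourier transform supported in $[-B/2,B/2]$, $\min_{i\neq j}|f_i-f_j|>B$; the $s_i$ are wide-sense stationary, zero mean, mutually uncorrelated, with $\mathbb{E}[|s_i(t)|^2]\neq 0$; transmission $i$ lies in the $xz$-plane with unknown angle of arrival $\theta_i$, $|\theta_i|<90^\circ$ (measured from the positive $x$ axis), and the electronic angles are distinct: $f_i\cos\theta_i\neq f_j\cos\theta_j$ and $f_i\sin\theta_i\neq f_j\sin\theta_j$ for $i\neq j$. $c>0$ is the propagation speed. L-shaped array: two orthogonal uniform linear arrays (along $x$ and $z$), $N$ sensors each with a common sensor at the origin, spacing $d$; every sensor multiplies its received signal by the same periodic function $p(t)$, low-pass filters and samples at rate $f_s$. With $\tau_n^x(\theta)=\frac{dn}{c}\cos\theta$, $\tau_n^z(\theta)=\frac{dn}{c}\sin\theta$, the samples satisfy $\mathbf{x}[k]=\mathbf{A}_x\mathbf{w}[k]$, $\mathbf{z}[k]=\mathbf{A}_z\mathbf{w}[k]$, where $(\mathbf{A}_x)_{n,i}=e^{j2\pi f_i\tau_n^x(\theta_i)}$, $(\mathbf{A}_z)_{n,i}=e^{j2\pi f_i\tau_n^z(\theta_i)}$, $n=1,\dots,N$, and $\mathbf{w}[k]\in\mathbb{C}^M$ has entries $w_i[k]=\tilde s_i(k/f_s)$ ($\tilde s_i$ the filtered version of $s_i(t)e^{j2\pi f_it}p(t)$); $\mathbf{R}_w=\mathbb{E}[\mathbf{w}\mathbf{w}^H]$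 is diagonal with nonzero diagonal entries. $\mathbf{x}_1,\mathbf{A}_{x_1}$ (resp. $\mathbf{x}_2,\mathbf{A}_{x_2}$) are the first (resp. last) $N-1$ rows of $\mathbf{x},\mathbf{A}_x$; likewise $\mathbf{z}_1,\mathbf{z}_2,\mathbf{A}_{z_1},\mathbf{A}_{z_2}$. $\boldsymbol{\Phi}=\mathrm{diag}(e^{j2\pi f_i\tau_1^x(\theta_i)})_{i=1}^M$, $\boldsymbol{\Psi}=\mathrm{diag}(e^{j2\pi f_i\tau_1^z(\theta_i)})_{i=1}^M$, so $\mathbf{A}_{x_2}=\mathbf{A}_{x_1}\boldsymbol{\Phi}$, $\mathbf{A}_{z_2}=\mathbf{A}_{z_1}\boldsymbol{\Psi}$. *)

theory Defs
  imports "HOL-Probability.Probability" "Jordan_Normal_Form.Matrix"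
begin

text \<open>Conventions: transmissions are indexed i = 0..M-1 (paper: 1..M); array rows
  r = 0..N-1 correspond to sensor n = r+1 (paper: n = 1..N).  Angles are in radians.\<close>

definition tau_x :: "real \<Rightarrow> real \<Rightarrow> nat \<Rightarrow> real \<Rightarrow> real" where
  "tau_x d c n \<theta> = d * real n / c * cos \<theta>"

definition tau_z :: "real \<Rightarrow> real \<Rightarrow> nat \<Rightarrow> real \<Rightarrow> real" where
  "tau_z d c n \<theta> = d * real n / c * sin \<theta>"

definition steer_x :: "nat \<Rightarrow> nat \<Rightarrow> real \<Rightarrow> real \<Rightarrow> (nat \<Rightarrow> real) \<Rightarrow> (nat \<Rightarrow> real) \<Rightarrow> complex mat" where
  "steer_x N M d c f \<theta> = mat N M (\<lambda>(r, i).
      exp (\<i> * complex_of_real (2 * pi * f i * tau_x d c (r + 1) (\<theta> i))))"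

definition steer_z :: "nat \<Rightarrow> nat \<Rightarrow> real \<Rightarrow> real \<Rightarrow> (nat \<Rightarrow> real) \<Rightarrow> (nat \<Rightarrow> real) \<Rightarrow> complex mat" where
  "steer_z N M d c f \<theta> = mat N M (\<lambda>(r, i).
      exp (\<i> * complex_of_real (2 * pi * f i * tau_z d c (r + 1) (\<theta> i))))"

definition first_rows :: "'a mat \<Rightarrow> 'a mat" where
  "first_rows A = mat (dim_row A - 1) (dim_col A) (\<lambda>(r, i). A $$ (r, i))"

definition last_rows :: "'a mat \<Rightarrow> 'a mat" where
  "last_rows A = mat (dim_row A - 1) (dim_col A) (\<lambda>(r, i). A $$ (r + 1, i))"

definition first_entries :: "'a vec \<Rightarrow> 'a vec" where
  "first_entries v = vec (dim_vec v - 1) (\<lambda>r. v $ r)"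

definition last_entries :: "'a vec \<Rightarrow> 'a vec" where
  "last_entries v = vec (dim_vec v - 1) (\<lambda>r. v $ (r + 1))"

definition Phi_mat :: "nat \<Rightarrow> real \<Rightarrow> real \<Rightarrow> (nat \<Rightarrow> real) \<Rightarrow> (nat \<Rightarrow> real) \<Rightarrow> complex mat" where
  "Phi_mat M d c f \<theta> = mat M M (\<lambda>(i, k). if i = k then
      exp (\<i> * complex_of_real (2 * pi * f i * tau_x d c 1 (\<theta> i))) else 0)"

definition Psi_mat :: "nat \<Rightarrow> real \<Rightarrow> real \<Rightarrow> (nat \<Rightarrow> real) \<Rightarrow> (nat \<Rightarrow> real) \<Rightarrow> complex mat" where
  "Psi_mat M d c f \<theta> = mat M M (\<lambda>(i, k). if i = k then
      exp (\<i> * complex_of_real (2 * pi * f i * tau_z d c 1 (\<theta> i))) else 0)"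

definition adj :: "complex mat \<Rightarrow> complex mat" (\<open>_\<^sup>H\<close> [1000] 1000) where
  "A\<^sup>H = mat (dim_col A) (dim_row A) (\<lambda>(i, j). cnj (A $$ (j, i)))"

definition xcorr :: "'w measure \<Rightarrow> nat \<Rightarrow> nat \<Rightarrow> ('w \<Rightarrow> complex vec) \<Rightarrow> ('w \<Rightarrow> complex vec) \<Rightarrow> complex mat" where
  "xcorr P m n X Y = mat m n (\<lambda>(a, b). integral\<^sup>L P (\<lambda>\<omega>. X \<omega> $ a * cnj (Y \<omega> $ b)))"

definition is_svd :: "complex mat \<Rightarrow> complex mat \<Rightarrow> complex mat \<Rightarrow> complex mat \<Rightarrow> bool" where
  "is_svd R U S V \<longleftrightarrow>
     (let m = dim_row R; n = dim_col R in
      U \<in> carrier_mat m m \<and> V \<in> carrier_mat n n \<and> S \<in> carrier_mat m n \<and>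
      U\<^sup>H * U = 1\<^sub>m m \<and> V\<^sup>H * V = 1\<^sub>m n \<and>
      (\<forall>i<m. \<forall>j<n. i \<noteq> j \<longrightarrow> S $$ (i, j) = 0) \<and>
      (\<forall>i<min m n. Im (S $$ (i, i)) = 0 \<and> 0 \<le> Re (S $$ (i, i))) \<and>
      (\<forall>i j. i \<le> j \<longrightarrow> j < min m n \<longrightarrow> Re (S $$ (j, j)) \<le> Re (S $$ (i, i))) \<and>
      R = U * S * V\<^sup>H)"

definition leading_left_singular_vectors :: "complex mat \<Rightarrow> nat \<Rightarrow> complex mat \<Rightarrow> bool" where
  "leading_left_singular_vectors R k U1 \<longleftrightarrow>
     (\<exists>U S V. is_svd R U S V \<and> U1 = mat (dim_row R) k (\<lambda>(i, j). U $$ (i, j)))"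

end

theory Submission
  imports Defs "Jordan_Normal_Form.Determinant" "HOL-Computational_Algebra.Polynomial"
begin

(*
  The three correlation matrices factor through the source covariance R_w, which is diagonal
  because the sources are uncorrelated: by the shift invariance A_x2 = A_x1 Phi, A_z2 = A_z1 Psi of
  the two uniform subarrays, R = G Q with G = [A_x1; A_x1 Phi; A_x1 Psi^H] and Q = R_w A_z1^H.
  Condition (c1) confines the normalized spatial frequencies f_i d cos(theta_i) / c to [-1/2, 1/2] and
  f_i d sin(theta_i) / c to (-1/2, 1/2), so distinct electronic angles give distinct phasors, and by
  (c2) the Vandermonde matrices A_x1, A_z1 have full column rank M. Hence R has rank M, its M leading
  singular values are positive, and U_1 = R V_1 S_1^-1 = G (Q V_1 S_1^-1) lies in the column space
  of G; orthonormality of U_1 forces the change of basis T to be invertible.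
*)

lemma adj_carrier_mat [simp]: "A \<in> carrier_mat m n \<Longrightarrow> A\<^sup>H \<in> carrier_mat n m"
  by (auto simp: adj_def)

lemma dim_adj [simp]: "dim_row (A\<^sup>H) = dim_col A" "dim_col (A\<^sup>H) = dim_row A"
  by (simp_all add: adj_def)

lemma index_adj [simp]: "i < dim_col A \<Longrightarrow> j < dim_row A \<Longrightarrow> A\<^sup>H $$ (i, j) = cnj (A $$ (j, i))"
  by (simp add: adj_def)

lemma adj_mult:
  assumes "A \<in> carrier_mat m k" "B \<in> carrier_mat k n"
  shows "(A * B)\<^sup>H = B\<^sup>H * A\<^sup>H"
  using assms by (intro eq_matI) (auto simp: scalar_prod_def cnj_sum mult.commute)

lemma adj_mat_diag: "(mat_diag n g)\<^sup>H = mat_diag n (\<lambda>i. cnj (g i))"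
  by (intro eq_matI) (auto simp: mat_diag_def)

lemma append_rows_mult:
  fixes A B C :: "'a :: semiring_0 mat"
  assumes A: "A \<in> carrier_mat n1 k" and B: "B \<in> carrier_mat n2 k" and C: "C \<in> carrier_mat k p"
  shows "(A @\<^sub>r B) * C = (A * C) @\<^sub>r (B * C)"
proof (rule eq_matI)
  fix i j assume "i < dim_row ((A * C) @\<^sub>r (B * C))" "j < dim_col ((A * C) @\<^sub>r (B * C))"
  then have ij: "i < n1 + n2" "j < p" using A B C by (auto simp: append_rows_def)
  have "row (A @\<^sub>r B) i = (if i < n1 then row A i else row B (i - n1))"
    using A B ij by (intro eq_vecI) (auto simp: append_rows_def)
  then show "((A @\<^sub>r B) * C) $$ (i, j) = ((A * C) @\<^sub>r (B * C)) $$ (i, j)"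
    using A B C ij by (auto simp: append_rows_def)
qed (use A B C in \<open>auto simp: append_rows_def\<close>)

definition rect_id :: "nat \<Rightarrow> nat \<Rightarrow> 'a :: semiring_1 mat" where
  "rect_id m n = mat m n (\<lambda>(i, j). if i = j then 1 else 0)"

lemma rect_id_carrier_mat [simp]: "rect_id m n \<in> carrier_mat m n"
  by (simp add: rect_id_def)

lemma dim_rect_id [simp]: "dim_row (rect_id m n) = m" "dim_col (rect_id m n) = n"
  by (simp_all add: rect_id_def)

lemma rect_id_mult_index:
  assumes "A \<in> carrier_mat k n" "i < m" "j < n"
  shows "(rect_id m k * A) $$ (i, j) = (if i < k then A $$ (i, j) else 0)"
proof -
  have "(rect_id m k * A) $$ (i, j) = (\<Sum>l<k. (if i = l then 1 else 0) * A $$ (l, j))"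
    using assms by (simp add: rect_id_def scalar_prod_def atLeast0LessThan)
  also have "\<dots> = (\<Sum>l<k. if l = i then A $$ (i, j) else 0)"
    by (rule sum.cong) auto
  finally show ?thesis by simp
qed

lemma mult_rect_id_index:
  assumes "A \<in> carrier_mat m k" "i < m" "j < n"
  shows "(A * rect_id k n) $$ (i, j) = (if j < k then A $$ (i, j) else 0)"
proof -
  have "(A * rect_id k n) $$ (i, j) = (\<Sum>l<k. A $$ (i, l) * (if l = j then 1 else 0))"
    using assms by (simp add: rect_id_def scalar_prod_def atLeast0LessThan)
  also have "\<dots> = (\<Sum>l<k. if l = j then A $$ (i, j) else 0)"
    by (rule sum.cong) auto
  finally show ?thesis by simp
qed

lemma rect_id_mult_rect_id:
  "k \<le> m \<Longrightarrow> rect_id k m * rect_id m k = (1\<^sub>m k :: 'a :: semiring_1 mat)"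
  by (intro eq_matI) (auto simp: rect_id_mult_index[OF rect_id_carrier_mat] simp del: index_mult_mat(1),
      auto simp: rect_id_def)

lemma rect_id_mult_rect_id_mult:
  assumes S: "S \<in> carrier_mat m n" and rows: "\<forall>i<m. \<forall>l<n. j \<le> i \<longrightarrow> S $$ (i, l) = 0"
  shows "rect_id m j * (rect_id j m * S) = S"
proof (rule eq_matI)
  have F: "rect_id j m * S \<in> carrier_mat j n" using S by auto
  fix i l assume "i < dim_row S" "l < dim_col S"
  then show "(rect_id m j * (rect_id j m * S)) $$ (i, l) = S $$ (i, l)"
    using rect_id_mult_index[OF F, of i m l] rect_id_mult_index[OF S, of i j l] rows S by auto
qed (use S in auto)

lemma det_mult_eq_0_if_inner_dim_less:
  fixes A B :: "'a :: field mat"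
  assumes A: "A \<in> carrier_mat n k" and B: "B \<in> carrier_mat k n" and "k < n"
  shows "det (A * B) = 0"
proof -
  have A': "A * rect_id k n \<in> carrier_mat n n" and B': "rect_id n k * B \<in> carrier_mat n n"
    using mult_carrier_mat[OF A rect_id_carrier_mat] mult_carrier_mat[OF rect_id_carrier_mat B] .
  have "A * B = A * (rect_id k n * rect_id n k) * B"
    using A B \<open>k < n\<close> by (simp add: rect_id_mult_rect_id)
  also have "\<dots> = (A * rect_id k n) * (rect_id n k * B)"
    using assoc_mult_mat[OF A rect_id_carrier_mat rect_id_carrier_mat]
      assoc_mult_mat[OF mult_carrier_mat[OF A rect_id_carrier_mat] rect_id_carrier_mat B] by simp
  finally have AB: "A * B = (A * rect_id k n) * (rect_id n k * B)" .
  have last_col: "(A * rect_id k n) $$ (i, n - 1) = 0" if "i < n" for i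
    using mult_rect_id_index[OF A that, of "n - 1"] \<open>k < n\<close> by simp
  have "(A * rect_id k n) *\<^sub>v unit_vec n (n - 1) = 0\<^sub>v n"
    using A' \<open>k < n\<close> last_col
    by (intro eq_vecI) (auto simp: scalar_prod_def unit_vec_def simp del: index_mult_mat intro!: sum.neutral)
  then have "det (A * rect_id k n) = 0"
    using \<open>k < n\<close> by (subst det_0_iff_vec_prod_zero_field[OF A']) (auto intro!: exI[of _ "unit_vec n (n - 1)"])
  then show ?thesis
    unfolding AB det_mult[OF A' B'] by simp
qed

text \<open>Row \<open>r\<close> holds the \<open>(r + 1)\<close>-th powers, matching sensor \<open>r + 1\<close> of the array.\<close>
definition vandermonde_mat :: "nat \<Rightarrow> nat \<Rightarrow> (nat \<Rightarrow> 'a :: comm_semiring_1) \<Rightarrow> 'a mat" where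
  "vandermonde_mat n k z = mat n k (\<lambda>(r, i). z i ^ (r + 1))"

lemma vandermonde_mat_carrier [simp]: "vandermonde_mat n k z \<in> carrier_mat n k"
  by (simp add: vandermonde_mat_def)

lemma dim_vandermonde_mat [simp]:
  "dim_row (vandermonde_mat n k z) = n" "dim_col (vandermonde_mat n k z) = k"
  by (simp_all add: vandermonde_mat_def)

lemma index_vandermonde_mat [simp]:
  "r < n \<Longrightarrow> i < k \<Longrightarrow> vandermonde_mat n k z $$ (r, i) = z i ^ (r + 1)"
  by (simp add: vandermonde_mat_def)

lemma first_rows_vandermonde_mat: "first_rows (vandermonde_mat n k z) = vandermonde_mat (n - 1) k z"
  by (intro eq_matI) (auto simp: first_rows_def)

lemma last_rows_vandermonde_mat:
  "last_rows (vandermonde_mat n k z) = vandermonde_mat (n - 1) k z * mat_diag k z"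
  by (subst mat_diag_mult_right[OF vandermonde_mat_carrier]) (auto intro!: eq_matI simp: last_rows_def mult.commute)

lemma det_vandermonde_mat_mult_diag_nonzero:
  fixes z D :: "nat \<Rightarrow> 'a :: field"
  assumes inj: "inj_on z {..<k}" and z: "\<forall>i<k. z i \<noteq> 0" and D: "\<forall>i<k. D i \<noteq> 0"
  shows "det (vandermonde_mat k k z * mat_diag k D) \<noteq> 0"
proof
  define A where "A = vandermonde_mat k k z * mat_diag k D"
  have Ac: "A \<in> carrier_mat k k" unfolding A_def by (rule mult_carrier_mat) auto
  have A_index: "A $$ (i, j) = D j * z j ^ (i + 1)" if "i < k" "j < k" for i j
    using that by (simp add: A_def mat_diag_mult_right[OF vandermonde_mat_carrier])
  assume "det (vandermonde_mat k k z * mat_diag k D) = 0"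
  then have "det (transpose_mat A) = 0"
    using det_transpose[OF Ac] by (simp add: A_def)
  then obtain v where v: "v \<in> carrier_vec k" "v \<noteq> 0\<^sub>v k" "transpose_mat A *\<^sub>v v = 0\<^sub>v k"
    using det_0_iff_vec_prod_zero_field[of "transpose_mat A" k] Ac by auto
  define p where "p = (\<Sum>i<k. monom (v $ i) i)"
  have coeff_p: "coeff p i = (if i < k then v $ i else 0)" for i
    by (simp add: p_def coeff_sum coeff_monom)
  \<comment> \<open>each node is a root of the polynomial with coefficient vector v\<close>
  have root: "poly p (z j) = 0" if j: "j < k" for j
  proof -
    have "(\<Sum>i\<in>{0..<k}. D j * z j ^ (i + 1) * v $ i) = (transpose_mat A *\<^sub>v v) $ j"
      using j v(1) Ac by (simp add: scalar_prod_def A_index)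
    also have "\<dots> = 0" using v(3) j by simp
    finally have "D j * z j * poly p (z j) = 0"
      by (simp add: p_def poly_sum poly_monom sum_distrib_left atLeast0LessThan algebra_simps)
    then show ?thesis using D z j by simp
  qed
  have "p = 0"
  proof (rule ccontr)
    assume p: "p \<noteq> 0"
    have "k = card (z ` {..<k})" using inj by (simp add: card_image)
    also have "\<dots> \<le> card {x. poly p x = 0}"
      using root by (intro card_mono poly_roots_finite[OF p]) auto
    also have "\<dots> \<le> degree p" by (rule card_poly_roots_bound[OF p])
    also have "\<dots> \<le> k - 1" by (rule degree_le) (auto simp: coeff_p)
    also have "\<dots> < k" using p by (cases k) (auto simp: p_def)
    finally show False by simp
  qed
  then have "v = 0\<^sub>v k"
    using v(1) coeff_p by (intro eq_vecI) (auto, metis coeff_0)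
  with v(2) show False by simp
qed

lemma invertible_mat_if_left_inverse:
  fixes T L :: "'a :: field mat"
  assumes T: "T \<in> carrier_mat k k" and L: "L \<in> carrier_mat k k" and LT: "L * T = 1\<^sub>m k"
  shows "invertible_mat T"
  using T L LT mat_mult_left_right_inverse[OF L T LT]
  unfolding invertible_mat_def inverts_mat_def by auto

lemma svd_rows_vanish_from_zero_singular_value:
  fixes R :: "complex mat"
  assumes svd: "is_svd R U S V" and R: "R \<in> carrier_mat m n"
    and j: "j < min m n" and Sj: "S $$ (j, j) = 0"
  shows "\<forall>i<m. \<forall>l<n. j \<le> i \<longrightarrow> S $$ (i, l) = 0"
proof (intro allI impI)
  from svd R have S_off: "\<forall>i<m. \<forall>l<n. i \<noteq> l \<longrightarrow> S $$ (i, l) = 0"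
    and S_diag: "\<forall>i<min m n. Im (S $$ (i, i)) = 0 \<and> 0 \<le> Re (S $$ (i, i))"
    and S_mono: "\<forall>i l. i \<le> l \<longrightarrow> l < min m n \<longrightarrow> Re (S $$ (l, l)) \<le> Re (S $$ (i, i))"
    unfolding is_svd_def Let_def by auto
  fix i l assume "i < m" "l < n" "j \<le> i"
  show "S $$ (i, l) = 0"
  proof (cases "i = l")
    case True
    with \<open>i < m\<close> \<open>l < n\<close> have "i < min m n" by simp
    then have "Re (S $$ (i, i)) \<le> 0" "0 \<le> Re (S $$ (i, i))" "Im (S $$ (i, i)) = 0"
      using S_mono S_diag Sj \<open>j \<le> i\<close> by (metis zero_complex.sel(1))+
    with True show ?thesis by (simp add: complex_eq_iff)
  qed (use S_off \<open>i < m\<close> \<open>l < n\<close> in auto)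
qed

lemma svd_leading_singular_values_nonzero:
  fixes R :: "complex mat"
  assumes svd: "is_svd R U S V" and R: "R \<in> carrier_mat m n"
    and L: "L \<in> carrier_mat k m" and K: "K \<in> carrier_mat n k"
    and det: "det (L * R * K) \<noteq> 0" and j: "j < k"
  shows "S $$ (j, j) \<noteq> 0"
proof
  assume Sj: "S $$ (j, j) = 0"
  from svd R have U: "U \<in> carrier_mat m m" and S: "S \<in> carrier_mat m n"
    and VH: "V\<^sup>H \<in> carrier_mat n n" and RUSV: "R = U * S * V\<^sup>H"
    unfolding is_svd_def Let_def by auto
  have "k \<le> m"
    using det det_mult_eq_0_if_inner_dim_less[OF L mult_carrier_mat[OF R K]] assoc_mult_mat[OF L R K]
    by (metis not_le)
  have "k \<le> n"
    using det det_mult_eq_0_if_inner_dim_less[OF mult_carrier_mat[OF L R] K] by (metis not_le)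
  define E :: "complex mat" where "E = rect_id m j"
  define F where "F = rect_id j m * S"
  have E: "E \<in> carrier_mat m j" and F: "F \<in> carrier_mat j n"
    using S by (auto simp: E_def F_def)
  \<comment> \<open>\<open>S\<close>, and with it \<open>L R K\<close>, factors through dimension \<open>j < k\<close>\<close>
  have SEF: "S = E * F"
    using svd_rows_vanish_from_zero_singular_value[OF svd R _ Sj] j \<open>k \<le> m\<close> \<open>k \<le> n\<close>
    unfolding E_def F_def by (intro rect_id_mult_rect_id_mult[OF S, symmetric]) auto
  have "L * R * K = L * ((U * E) * (F * V\<^sup>H)) * K"
    unfolding RUSV SEF
    using assoc_mult_mat[OF U E F, symmetric] assoc_mult_mat[OF mult_carrier_mat[OF U E] F VH] by simp
  also have "\<dots> = (L * U * E) * (F * V\<^sup>H * K)"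
    using assoc_mult_mat[OF L mult_carrier_mat[OF U E] mult_carrier_mat[OF F VH], symmetric]
      assoc_mult_mat[OF mult_carrier_mat[OF L mult_carrier_mat[OF U E]] mult_carrier_mat[OF F VH] K]
      assoc_mult_mat[OF L U E] assoc_mult_mat[OF F VH K] by simp
  finally have "det (L * R * K) = 0"
    using L U E F VH K j by (simp add: det_mult_eq_0_if_inner_dim_less[of _ k j])
  with det show False ..
qed

lemma svd_leading_left_vectors_in_column_space:
  fixes G Q :: "complex mat"
  assumes svd: "is_svd (G * Q) U S V" and G: "G \<in> carrier_mat m r" and Q: "Q \<in> carrier_mat r n"
    and "k \<le> m" "k \<le> n" and S_nz: "\<forall>j<k. S $$ (j, j) \<noteq> 0"
  shows "\<exists>T. T \<in> carrier_mat r k \<and> mat m k (\<lambda>(i, j). U $$ (i, j)) = G * T"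
proof -
  from svd G Q have U: "U \<in> carrier_mat m m" and S: "S \<in> carrier_mat m n"
    and V: "V \<in> carrier_mat n n" and VV: "V\<^sup>H * V = 1\<^sub>m n"
    and S_off: "\<forall>i<m. \<forall>l<n. i \<noteq> l \<longrightarrow> S $$ (i, l) = 0"
    and GQ: "G * Q = U * S * V\<^sup>H"
    unfolding is_svd_def Let_def by auto
  have GQV: "G * (Q * V) = U * S"
  proof -
    have "G * (Q * V) = U * S * V\<^sup>H * V" using GQ assoc_mult_mat[OF G Q V] by simp
    also have "\<dots> = U * S * (V\<^sup>H * V)" using U S V by (intro assoc_mult_mat) auto
    finally show ?thesis using VV U S by simp
  qed
  have US: "(U * S) $$ (i, j) = U $$ (i, j) * S $$ (j, j)" if "i < m" "j < k" for i j
  proof -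
    have "(U * S) $$ (i, j) = (\<Sum>l<m. U $$ (i, l) * S $$ (l, j))"
      using that U S \<open>k \<le> n\<close> by (simp add: scalar_prod_def atLeast0LessThan)
    also have "\<dots> = (\<Sum>l<m. if l = j then U $$ (i, j) * S $$ (j, j) else 0)"
      using that S_off \<open>k \<le> n\<close> by (intro sum.cong) auto
    finally show ?thesis using that \<open>k \<le> m\<close> by simp
  qed
  \<comment> \<open>\<open>U\<^sub>1 = R V\<^sub>1 S\<^sub>1\<^sup>-\<^sup>1 = G (Q V\<^sub>1 S\<^sub>1\<^sup>-\<^sup>1)\<close>\<close>
  define T where "T = mat r k (\<lambda>(l, j). (Q * V) $$ (l, j) / S $$ (j, j))"
  have "mat m k (\<lambda>(i, j). U $$ (i, j)) = G * T"
  proof (rule eq_matI)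
    fix i j assume "i < dim_row (G * T)" "j < dim_col (G * T)"
    then have ij: "i < m" "j < k" using G by (auto simp: T_def)
    have "(G * T) $$ (i, j) = (\<Sum>l<r. G $$ (i, l) * (Q * V) $$ (l, j)) / S $$ (j, j)"
      using ij G by (simp add: T_def scalar_prod_def atLeast0LessThan sum_divide_distrib)
    also have "(\<Sum>l<r. G $$ (i, l) * (Q * V) $$ (l, j)) = (G * (Q * V)) $$ (i, j)"
      using ij G Q V \<open>k \<le> n\<close> by (simp add: scalar_prod_def atLeast0LessThan)
    finally show "mat m k (\<lambda>(i, j). U $$ (i, j)) $$ (i, j) = (G * T) $$ (i, j)"
      using ij S_nz by (simp add: GQV US)
  qed (use G in \<open>auto simp: T_def\<close>)
  moreover have "T \<in> carrier_mat r k" by (simp add: T_def)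
  ultimately show ?thesis by blast
qed

lemma leading_left_singular_vectors_orthonormal:
  assumes "leading_left_singular_vectors R k U1" and "k \<le> dim_row R"
  shows "U1\<^sup>H * U1 = 1\<^sub>m k"
proof -
  obtain m n where R: "R \<in> carrier_mat m n" by blast
  then have m: "m = dim_row R" by simp
  obtain U S V where svd: "is_svd R U S V" and U1: "U1 = mat m k (\<lambda>(i, j). U $$ (i, j))"
    using assms(1) R unfolding leading_left_singular_vectors_def by auto
  from svd R have U: "U \<in> carrier_mat m m" and UU: "U\<^sup>H * U = 1\<^sub>m m"
    unfolding is_svd_def Let_def by auto
  show ?thesis
  proof (rule eq_matI)
    fix i j assume "i < dim_row (1\<^sub>m k :: complex mat)" "j < dim_col (1\<^sub>m k :: complex mat)"
    then have ij: "i < k" "j < k" by auto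
    have "(U1\<^sup>H * U1) $$ (i, j) = (\<Sum>l\<in>{0..<m}. cnj (U $$ (l, i)) * U $$ (l, j))"
      using ij U1 assms(2) by (simp add: m adj_def scalar_prod_def)
    also have "\<dots> = (U\<^sup>H * U) $$ (i, j)"
      using ij U assms(2) by (simp add: m adj_def scalar_prod_def)
    finally show "(U1\<^sup>H * U1) $$ (i, j) = 1\<^sub>m k $$ (i, j)"
      using UU ij assms(2) m by simp
  qed (use U1 in \<open>auto simp: adj_def\<close>)
qed

lemma leading_left_singular_vectors_factor:
  fixes G Q U1 :: "complex mat"
  assumes G: "G \<in> carrier_mat m k" and Q: "Q \<in> carrier_mat k n"
    and L: "L \<in> carrier_mat k m" and det_LG: "det (L * G) \<noteq> 0"
    and K: "K \<in> carrier_mat n k" and det_QK: "det (Q * K) \<noteq> 0"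
    and U1: "leading_left_singular_vectors (G * Q) k U1"
  shows "\<exists>T. T \<in> carrier_mat k k \<and> invertible_mat T \<and> U1 = G * T"
proof -
  have GQ: "G * Q \<in> carrier_mat m n" using G Q by auto
  have "k \<le> m" using det_LG det_mult_eq_0_if_inner_dim_less[OF L G] by (meson not_le)
  have "k \<le> n" using det_QK det_mult_eq_0_if_inner_dim_less[OF Q K] by (meson not_le)
  have "L * (G * Q) * K = (L * G) * (Q * K)"
    using assoc_mult_mat[OF L G Q, symmetric] assoc_mult_mat[OF mult_carrier_mat[OF L G] Q K] by simp
  then have det_LGQK: "det (L * (G * Q) * K) \<noteq> 0"
    using det_LG det_QK det_mult[OF mult_carrier_mat[OF L G] mult_carrier_mat[OF Q K]] by simp
  obtain U S V where svd: "is_svd (G * Q) U S V"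
    and U1_def: "U1 = mat (dim_row (G * Q)) k (\<lambda>(i, j). U $$ (i, j))"
    using U1 unfolding leading_left_singular_vectors_def by blast
  have "\<forall>j<k. S $$ (j, j) \<noteq> 0"
    using svd_leading_singular_values_nonzero[OF svd GQ L K det_LGQK] by blast
  then obtain T where T: "T \<in> carrier_mat k k" and U1_GT: "U1 = G * T"
    using svd_leading_left_vectors_in_column_space[OF svd G Q \<open>k \<le> m\<close> \<open>k \<le> n\<close>]
    unfolding U1_def using GQ by auto
  have U1_carrier: "U1 \<in> carrier_mat m k" using U1_GT G T by simp
  have "(U1\<^sup>H * G) * T = U1\<^sup>H * U1"
    using assoc_mult_mat[OF adj_carrier_mat[OF U1_carrier] G T] U1_GT by simp
  also have "\<dots> = 1\<^sub>m k"
    using leading_left_singular_vectors_orthonormal[OF U1] G \<open>k \<le> m\<close> by simp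
  finally have "(U1\<^sup>H * G) * T = 1\<^sub>m k" .
  then have "invertible_mat T"
    using T G U1_GT by (intro invertible_mat_if_left_inverse[of _ k "U1\<^sup>H * G"]) auto
  with T U1_GT show ?thesis by blast
qed

lemma det_rect_id_mult_stacked_vandermonde_nonzero:
  fixes z :: "nat \<Rightarrow> 'a :: field"
  assumes "k \<le> n" and B: "B \<in> carrier_mat p k"
    and inj: "inj_on z {..<k}" and z: "\<forall>i<k. z i \<noteq> 0"
  shows "det (rect_id k (n + p) * (vandermonde_mat n k z @\<^sub>r B)) \<noteq> 0"
proof -
  have VB: "vandermonde_mat n k z @\<^sub>r B \<in> carrier_mat (n + p) k" using B by auto
  have "rect_id k (n + p) * (vandermonde_mat n k z @\<^sub>r B) = vandermonde_mat k k z * mat_diag k (\<lambda>_. 1)"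
  proof (rule eq_matI)
    fix i j assume "i < dim_row (vandermonde_mat k k z * mat_diag k (\<lambda>_. 1))"
      "j < dim_col (vandermonde_mat k k z * mat_diag k (\<lambda>_. 1))"
    then have ij: "i < k" "j < k" by auto
    then have "(rect_id k (n + p) * (vandermonde_mat n k z @\<^sub>r B)) $$ (i, j)
        = (vandermonde_mat n k z @\<^sub>r B) $$ (i, j)"
      using rect_id_mult_index[OF VB] ij \<open>k \<le> n\<close> by simp
    also have "\<dots> = z j ^ (i + 1)"
      using ij \<open>k \<le> n\<close> B by (simp add: append_rows_def)
    finally show "(rect_id k (n + p) * (vandermonde_mat n k z @\<^sub>r B)) $$ (i, j)
        = (vandermonde_mat k k z * mat_diag k (\<lambda>_. 1)) $$ (i, j)"
      using ij by simp
  qed (use VB in auto)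
  then show ?thesis
    using det_vandermonde_mat_mult_diag_nonzero[OF inj z, of "\<lambda>_. 1"] by simp
qed

lemma det_diag_mult_adj_vandermonde_nonzero:
  fixes z D :: "nat \<Rightarrow> complex"
  assumes "k \<le> n" and inj: "inj_on z {..<k}" and z: "\<forall>i<k. z i \<noteq> 0" and D: "\<forall>i<k. D i \<noteq> 0"
  shows "det (mat_diag k D * (vandermonde_mat n k z)\<^sup>H * rect_id n k) \<noteq> 0"
proof -
  have VH: "(vandermonde_mat n k z)\<^sup>H \<in> carrier_mat k n" by simp
  have DVH: "mat_diag k D * (vandermonde_mat n k z)\<^sup>H = mat k n (\<lambda>(i, l). D i * cnj (z i ^ (l + 1)))"
    by (intro eq_matI) (simp_all add: mat_diag_mult_left[OF VH])
  have V': "vandermonde_mat k k (\<lambda>i. cnj (z i)) * mat_diag k D \<in> carrier_mat k k"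
    using mult_carrier_mat[OF vandermonde_mat_carrier mat_diag_dim] .
  have "mat_diag k D * (vandermonde_mat n k z)\<^sup>H * rect_id n k
      = transpose_mat (vandermonde_mat k k (\<lambda>i. cnj (z i)) * mat_diag k D)"
    unfolding DVH using \<open>k \<le> n\<close>
    by (intro eq_matI) (auto simp: mult_rect_id_index[OF mat_carrier] mat_diag_mult_right[OF vandermonde_mat_carrier]
        mult.commute simp del: index_mult_mat(1))
  moreover have "inj_on (\<lambda>i. cnj (z i)) {..<k}"
    using inj by (auto simp: inj_on_def)
  ultimately show ?thesis
    using det_transpose[OF V'] det_vandermonde_mat_mult_diag_nonzero[of "\<lambda>i. cnj (z i)" k D] z D by simp
qed

definition phasor_x :: "real \<Rightarrow> real \<Rightarrow> (nat \<Rightarrow> real) \<Rightarrow> (nat \<Rightarrow> real) \<Rightarrow> nat \<Rightarrow> complex" where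
  "phasor_x d c f \<theta> i = exp (\<i> * complex_of_real (2 * pi * f i * tau_x d c 1 (\<theta> i)))"

definition phasor_z :: "real \<Rightarrow> real \<Rightarrow> (nat \<Rightarrow> real) \<Rightarrow> (nat \<Rightarrow> real) \<Rightarrow> nat \<Rightarrow> complex" where
  "phasor_z d c f \<theta> i = exp (\<i> * complex_of_real (2 * pi * f i * tau_z d c 1 (\<theta> i)))"

lemma exp_i_of_real_nat_mult:
  "exp (\<i> * complex_of_real (real n * x)) = exp (\<i> * complex_of_real x) ^ n"
  using exp_of_nat_mult[of n "\<i> * complex_of_real x"] by (simp add: mult.left_commute)

lemma steer_x_eq_vandermonde_mat: "steer_x N M d c f \<theta> = vandermonde_mat N M (phasor_x d c f \<theta>)"
proof (rule eq_matI)
  fix r i assume "r < dim_row (vandermonde_mat N M (phasor_x d c f \<theta>))"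
    "i < dim_col (vandermonde_mat N M (phasor_x d c f \<theta>))"
  then have ri: "r < N" "i < M" by auto
  have tau: "2 * pi * f i * tau_x d c (r + 1) (\<theta> i) = real (r + 1) * (2 * pi * f i * tau_x d c 1 (\<theta> i))"
    by (simp add: tau_x_def)
  have "steer_x N M d c f \<theta> $$ (r, i) = exp (\<i> * complex_of_real (2 * pi * f i * tau_x d c (r + 1) (\<theta> i)))"
    using ri by (simp add: steer_x_def del: of_real_mult)
  also have "\<dots> = phasor_x d c f \<theta> i ^ (r + 1)"
    unfolding tau exp_i_of_real_nat_mult phasor_x_def ..
  finally show "steer_x N M d c f \<theta> $$ (r, i) = vandermonde_mat N M (phasor_x d c f \<theta>) $$ (r, i)"
    using ri by simp
qed (simp_all add: steer_x_def)

lemma steer_z_eq_vandermonde_mat: "steer_z N M d c f \<theta> = vandermonde_mat N M (phasor_z d c f \<theta>)"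
proof (rule eq_matI)
  fix r i assume "r < dim_row (vandermonde_mat N M (phasor_z d c f \<theta>))"
    "i < dim_col (vandermonde_mat N M (phasor_z d c f \<theta>))"
  then have ri: "r < N" "i < M" by auto
  have tau: "2 * pi * f i * tau_z d c (r + 1) (\<theta> i) = real (r + 1) * (2 * pi * f i * tau_z d c 1 (\<theta> i))"
    by (simp add: tau_z_def)
  have "steer_z N M d c f \<theta> $$ (r, i) = exp (\<i> * complex_of_real (2 * pi * f i * tau_z d c (r + 1) (\<theta> i)))"
    using ri by (simp add: steer_z_def del: of_real_mult)
  also have "\<dots> = phasor_z d c f \<theta> i ^ (r + 1)"
    unfolding tau exp_i_of_real_nat_mult phasor_z_def ..
  finally show "steer_z N M d c f \<theta> $$ (r, i) = vandermonde_mat N M (phasor_z d c f \<theta>) $$ (r, i)"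
    using ri by simp
qed (simp_all add: steer_z_def)

lemma Phi_mat_eq_mat_diag: "Phi_mat M d c f \<theta> = mat_diag M (phasor_x d c f \<theta>)"
  by (intro eq_matI) (auto simp: Phi_mat_def mat_diag_def phasor_x_def)

lemma Psi_mat_eq_mat_diag: "Psi_mat M d c f \<theta> = mat_diag M (phasor_z d c f \<theta>)"
  by (intro eq_matI) (auto simp: Psi_mat_def mat_diag_def phasor_z_def)

lemma exp_two_pi_i_eq_imp_int_diff:
  assumes "exp (\<i> * complex_of_real (2 * pi * a)) = exp (\<i> * complex_of_real (2 * pi * b))"
  obtains n :: int where "a = b + of_int n"
proof -
  obtain n :: int where
    "\<i> * complex_of_real (2 * pi * a) = \<i> * complex_of_real (2 * pi * b) + complex_of_real (of_int (2 * n) * pi) * \<i>"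
    using assms exp_eq by blast
  then have "Im (\<i> * complex_of_real (2 * pi * a))
      = Im (\<i> * complex_of_real (2 * pi * b) + complex_of_real (of_int (2 * n) * pi) * \<i>)"
    by (rule arg_cong)
  then have "2 * pi * a = 2 * pi * (b + of_int n)" by (simp add: algebra_simps)
  then show ?thesis using that by simp
qed

lemma int_shift_within_half:
  fixes a b :: real and n :: int
  assumes a: "\<bar>a\<bar> \<le> 1 / 2" and b: "\<bar>b\<bar> \<le> 1 / 2" and ab: "a = b + of_int n"
  shows "a = b \<or> \<bar>a\<bar> = 1 / 2 \<and> \<bar>b\<bar> = 1 / 2"
proof -
  have "-1 \<le> real_of_int n" "real_of_int n \<le> 1"
    using a b ab unfolding abs_le_iff by linarith+
  then have "n = -1 \<or> n = 0 \<or> n = 1" by linarith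
  then show ?thesis using a b ab unfolding abs_le_iff by (auto simp: abs_if)
qed

lemma spatial_frequency_bounds:
  fixes f \<theta> :: real
  assumes c: "c > 0" and d: "d > 0" and "f_Nyq > 0" and f: "\<bar>f\<bar> \<le> f_Nyq / 2"
    and dc: "d \<le> c / f_Nyq" and \<theta>: "\<bar>\<theta>\<bar> < pi / 2"
  shows "\<bar>f * tau_x d c 1 \<theta>\<bar> \<le> 1 / 2"
    and "\<bar>f * tau_z d c 1 \<theta>\<bar> < 1 / 2"
    and "\<bar>f * tau_x d c 1 \<theta>\<bar> = 1 / 2 \<Longrightarrow> sin \<theta> = 0"
proof -
  have cos_pos: "cos \<theta> > 0" using \<theta> by (intro cos_gt_zero_pi) auto
  have sin_cos: "(sin \<theta>)\<^sup>2 + (cos \<theta>)\<^sup>2 = 1" by simp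
  then have "(sin \<theta>)\<^sup>2 < 1" using cos_pos by (smt (verit) zero_less_power)
  then have "\<bar>sin \<theta>\<bar> < 1" by (simp add: abs_square_less_1)
  have fd: "\<bar>f\<bar> * d \<le> c / 2"
  proof -
    have "\<bar>f\<bar> * d \<le> (f_Nyq / 2) * (c / f_Nyq)" using f dc d by (intro mult_mono) auto
    also have "\<dots> = c / 2" using \<open>f_Nyq > 0\<close> by simp
    finally show ?thesis .
  qed
  have x: "\<bar>f * tau_x d c 1 \<theta>\<bar> = \<bar>f\<bar> * d * cos \<theta> / c"
    using c d cos_pos by (simp add: tau_x_def abs_mult)
  have z: "\<bar>f * tau_z d c 1 \<theta>\<bar> = \<bar>f\<bar> * d * \<bar>sin \<theta>\<bar> / c"
    using c d by (simp add: tau_z_def abs_mult)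
  have fd_cos: "\<bar>f\<bar> * d * cos \<theta> \<le> \<bar>f\<bar> * d"
    using cos_pos d by (simp add: mult_left_le)
  show "\<bar>f * tau_x d c 1 \<theta>\<bar> \<le> 1 / 2"
    unfolding x using fd_cos fd c by (simp add: divide_simps)
  have "\<bar>f\<bar> * d * \<bar>sin \<theta>\<bar> \<le> c / 2 * \<bar>sin \<theta>\<bar>" by (rule mult_right_mono[OF fd]) simp
  also have "\<dots> < c / 2" using \<open>\<bar>sin \<theta>\<bar> < 1\<close> c by simp
  finally show "\<bar>f * tau_z d c 1 \<theta>\<bar> < 1 / 2"
    unfolding z using c by (simp add: divide_simps)
  assume "\<bar>f * tau_x d c 1 \<theta>\<bar> = 1 / 2"
  then have fd_cos_eq: "\<bar>f\<bar> * d * cos \<theta> = c / 2" unfolding x using c by (simp add: divide_simps)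
  with fd fd_cos have fd_eq: "\<bar>f\<bar> * d = c / 2" by linarith
  then have fd_nz: "\<bar>f\<bar> * d \<noteq> 0" using c by linarith
  have "\<bar>f\<bar> * d * cos \<theta> = \<bar>f\<bar> * d * 1" using fd_cos_eq fd_eq by (simp only: mult_1_right)
  then have "cos \<theta> = 1" by (rule mult_left_cancel[OF fd_nz, THEN iffD1])
  then show "sin \<theta> = 0" using sin_cos by simp
qed

lemma inj_on_phasor_x:
  assumes c: "c > 0" and d: "d > 0" and "f_Nyq > 0"
    and f_band: "\<forall>i<M. \<bar>f i\<bar> \<le> f_Nyq / 2" and angles: "\<forall>i<M. \<bar>\<theta> i\<bar> < pi / 2"
    and dc: "d \<le> c / f_Nyq"
    and distinct_x: "\<forall>i<M. \<forall>j<M. i \<noteq> j \<longrightarrow> f i * cos (\<theta> i) \<noteq> f j * cos (\<theta> j)"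
    and distinct_z: "\<forall>i<M. \<forall>j<M. i \<noteq> j \<longrightarrow> f i * sin (\<theta> i) \<noteq> f j * sin (\<theta> j)"
  shows "inj_on (phasor_x d c f \<theta>) {..<M}"
proof (rule inj_onI, rule ccontr)
  fix i j assume i: "i \<in> {..<M}" and j: "j \<in> {..<M}" and ij: "i \<noteq> j"
    and eq: "phasor_x d c f \<theta> i = phasor_x d c f \<theta> j"
  define \<nu> where "\<nu> k = f k * tau_x d c 1 (\<theta> k)" for k
  have \<nu>_bound: "\<bar>\<nu> k\<bar> \<le> 1 / 2" "\<bar>\<nu> k\<bar> = 1 / 2 \<Longrightarrow> sin (\<theta> k) = 0" if "k < M" for k
    using spatial_frequency_bounds[OF c d \<open>f_Nyq > 0\<close> f_band[rule_format, OF that] dc angles[rule_format, OF that]]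
    unfolding \<nu>_def by auto
  have "exp (\<i> * complex_of_real (2 * pi * \<nu> i)) = exp (\<i> * complex_of_real (2 * pi * \<nu> j))"
    using eq by (simp add: phasor_x_def \<nu>_def mult.assoc)
  then obtain n :: int where "\<nu> i = \<nu> j + of_int n"
    by (rule exp_two_pi_i_eq_imp_int_diff)
  then consider "\<nu> i = \<nu> j" | "\<bar>\<nu> i\<bar> = 1 / 2" "\<bar>\<nu> j\<bar> = 1 / 2"
    using int_shift_within_half \<nu>_bound(1) i j by blast
  then show False
  proof cases
    case 1
    then have "f i * cos (\<theta> i) = f j * cos (\<theta> j)"
      using c d by (simp add: \<nu>_def tau_x_def field_simps)
    with distinct_x i j ij show False by auto
  next
    \<comment> \<open>\<open>\<nu> = 1/2\<close> and \<open>\<nu> = -1/2\<close> alias, but \<open>|\<nu>| = 1/2\<close> forces \<open>sin \<theta> = 0\<close> for both sources\<close>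
    case 2
    then have "sin (\<theta> i) = 0" "sin (\<theta> j) = 0"
      using \<nu>_bound(2) i j by auto
    with distinct_z i j ij show False by auto
  qed
qed

lemma inj_on_phasor_z:
  assumes c: "c > 0" and d: "d > 0" and "f_Nyq > 0"
    and f_band: "\<forall>i<M. \<bar>f i\<bar> \<le> f_Nyq / 2" and angles: "\<forall>i<M. \<bar>\<theta> i\<bar> < pi / 2"
    and dc: "d \<le> c / f_Nyq"
    and distinct_z: "\<forall>i<M. \<forall>j<M. i \<noteq> j \<longrightarrow> f i * sin (\<theta> i) \<noteq> f j * sin (\<theta> j)"
  shows "inj_on (phasor_z d c f \<theta>) {..<M}"
proof (rule inj_onI, rule ccontr)
  fix i j assume i: "i \<in> {..<M}" and j: "j \<in> {..<M}" and ij: "i \<noteq> j"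
    and eq: "phasor_z d c f \<theta> i = phasor_z d c f \<theta> j"
  define \<nu> where "\<nu> k = f k * tau_z d c 1 (\<theta> k)" for k
  have \<nu>_bound: "\<bar>\<nu> k\<bar> < 1 / 2" if "k < M" for k
    using spatial_frequency_bounds(2)[OF c d \<open>f_Nyq > 0\<close> f_band[rule_format, OF that] dc angles[rule_format, OF that]]
    unfolding \<nu>_def .
  have "exp (\<i> * complex_of_real (2 * pi * \<nu> i)) = exp (\<i> * complex_of_real (2 * pi * \<nu> j))"
    using eq by (simp add: phasor_z_def \<nu>_def mult.assoc)
  then obtain n :: int where "\<nu> i = \<nu> j + of_int n"
    by (rule exp_two_pi_i_eq_imp_int_diff)
  with \<nu>_bound[of i] \<nu>_bound[of j] i j have "\<nu> i = \<nu> j"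
    using int_shift_within_half[of "\<nu> i" "\<nu> j" n] by auto
  then have "f i * sin (\<theta> i) = f j * sin (\<theta> j)"
    using c d by (simp add: \<nu>_def tau_z_def field_simps)
  with distinct_z i j ij show False by auto
qed

lemma integral_sum_mult_cnj_sum:
  fixes X :: "'w \<Rightarrow> nat \<Rightarrow> complex"
  assumes int: "\<forall>i<K. \<forall>j<K. integrable P (\<lambda>\<omega>. X \<omega> i * cnj (X \<omega> j))"
  shows "integral\<^sup>L P (\<lambda>\<omega>. (\<Sum>i<K. a i * X \<omega> i) * cnj (\<Sum>j<K. b j * X \<omega> j))
       = (\<Sum>i<K. \<Sum>j<K. a i * cnj (b j) * integral\<^sup>L P (\<lambda>\<omega>. X \<omega> i * cnj (X \<omega> j)))"
proof -
  have expand: "(\<lambda>\<omega>. (\<Sum>i<K. a i * X \<omega> i) * cnj (\<Sum>j<K. b j * X \<omega> j))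
      = (\<lambda>\<omega>. \<Sum>i<K. \<Sum>j<K. a i * cnj (b j) * (X \<omega> i * cnj (X \<omega> j)))"
    by (simp add: sum_distrib_left sum_distrib_right cnj_sum mult_ac) (rule ext, rule sum.swap)
  have "integral\<^sup>L P (\<lambda>\<omega>. \<Sum>i<K. \<Sum>j<K. a i * cnj (b j) * (X \<omega> i * cnj (X \<omega> j))) = (\<Sum>i<K. integral\<^sup>L P (\<lambda>\<omega>. \<Sum>j<K. a i * cnj (b j) * (X \<omega> i * cnj (X \<omega> j))))"
    using int by (intro Bochner_Integration.integral_sum) auto
  also have "\<dots> = (\<Sum>i<K. \<Sum>j<K. a i * cnj (b j) * integral\<^sup>L P (\<lambda>\<omega>. X \<omega> i * cnj (X \<omega> j)))"
    using int by (intro sum.cong refl, subst Bochner_Integration.integral_sum) auto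
  finally show ?thesis unfolding expand .
qed

lemma xcorr_mult_mat_vec:
  fixes A B :: "complex mat" and W :: "'w \<Rightarrow> nat \<Rightarrow> complex"
  assumes A: "A \<in> carrier_mat m K" and B: "B \<in> carrier_mat n K"
    and int: "\<forall>i<K. \<forall>j<K. integrable P (\<lambda>\<omega>. W \<omega> i * cnj (W \<omega> j))"
  shows "xcorr P m n (\<lambda>\<omega>. A *\<^sub>v vec K (W \<omega>)) (\<lambda>\<omega>. B *\<^sub>v vec K (W \<omega>))
       = A * xcorr P K K (\<lambda>\<omega>. vec K (W \<omega>)) (\<lambda>\<omega>. vec K (W \<omega>)) * B\<^sup>H"
    (is "_ = A * ?C * B\<^sup>H")
proof (rule eq_matI)
  fix a b assume "a < dim_row (A * ?C * B\<^sup>H)" "b < dim_col (A * ?C * B\<^sup>H)"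
  then have ab: "a < m" "b < n" using A B by auto
  have C: "?C \<in> carrier_mat K K" by (simp add: xcorr_def)
  have "xcorr P m n (\<lambda>\<omega>. A *\<^sub>v vec K (W \<omega>)) (\<lambda>\<omega>. B *\<^sub>v vec K (W \<omega>)) $$ (a, b)
      = integral\<^sup>L P (\<lambda>\<omega>. (\<Sum>i<K. A $$ (a, i) * W \<omega> i) * cnj (\<Sum>j<K. B $$ (b, j) * W \<omega> j))"
    using ab A B by (simp add: xcorr_def scalar_prod_def atLeast0LessThan)
  also have "\<dots> = (\<Sum>i<K. \<Sum>j<K. A $$ (a, i) * cnj (B $$ (b, j)) * ?C $$ (i, j))"
    by (subst integral_sum_mult_cnj_sum[OF int]) (simp add: xcorr_def)
  also have "\<dots> = (\<Sum>j<K. (\<Sum>i<K. A $$ (a, i) * ?C $$ (i, j)) * cnj (B $$ (b, j)))"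
    by (subst sum.swap) (simp add: sum_distrib_left sum_distrib_right mult_ac)
  also have "\<dots> = (A * ?C * B\<^sup>H) $$ (a, b)"
    using ab A B C by (simp add: scalar_prod_def atLeast0LessThan)
  finally show "xcorr P m n (\<lambda>\<omega>. A *\<^sub>v vec K (W \<omega>)) (\<lambda>\<omega>. B *\<^sub>v vec K (W \<omega>)) $$ (a, b)
      = (A * ?C * B\<^sup>H) $$ (a, b)" .
qed (use A B in \<open>auto simp: xcorr_def\<close>)

lemma xcorr_uncorrelated:
  assumes "\<forall>i<K. \<forall>j<K. i \<noteq> j \<longrightarrow> integral\<^sup>L P (\<lambda>\<omega>. W \<omega> i * cnj (W \<omega> j)) = 0"
  shows "xcorr P K K (\<lambda>\<omega>. vec K (W \<omega>)) (\<lambda>\<omega>. vec K (W \<omega>))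
       = mat_diag K (\<lambda>i. integral\<^sup>L P (\<lambda>\<omega>. W \<omega> i * cnj (W \<omega> i)))"
  using assms by (intro eq_matI) (auto simp: xcorr_def mat_diag_def)

lemma first_entries_mult_mat_vec: "first_entries (A *\<^sub>v v) = first_rows A *\<^sub>v v"
proof -
  have "row (first_rows A) r = row A r" if "r < dim_row A - 1" for r
    using that by (intro eq_vecI) (auto simp: first_rows_def)
  then show ?thesis by (intro eq_vecI) (auto simp: first_entries_def first_rows_def)
qed

lemma last_entries_mult_mat_vec: "last_entries (A *\<^sub>v v) = last_rows A *\<^sub>v v"
proof -
  have "row (last_rows A) r = row A (r + 1)" if "r < dim_row A - 1" for r
    using that by (intro eq_vecI) (auto simp: last_rows_def)
  then show ?thesis by (intro eq_vecI) (auto simp: last_entries_def last_rows_def)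
qed

lemma mult_diag_mult_adj_mult_diag:
  fixes A B :: "complex mat"
  assumes A: "A \<in> carrier_mat n k" and B: "B \<in> carrier_mat p k"
  shows "A * mat_diag k D * (B * mat_diag k g)\<^sup>H = (A * (mat_diag k g)\<^sup>H) * (mat_diag k D * B\<^sup>H)"
proof -
  define R \<Psi>H where "R = mat_diag k D" and "\<Psi>H = (mat_diag k g)\<^sup>H"
  have R: "R \<in> carrier_mat k k" and \<Psi>H: "\<Psi>H \<in> carrier_mat k k" and BH: "B\<^sup>H \<in> carrier_mat k p"
    using B by (simp_all add: R_def \<Psi>H_def)
  have commute: "R * \<Psi>H = \<Psi>H * R"
    by (simp add: R_def \<Psi>H_def adj_mat_diag mult.commute)
  have "A * R * (B * mat_diag k g)\<^sup>H = A * ((R * \<Psi>H) * B\<^sup>H)"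
    unfolding adj_mult[OF B mat_diag_dim] \<Psi>H_def[symmetric]
    using assoc_mult_mat[OF A R mult_carrier_mat[OF \<Psi>H BH]] assoc_mult_mat[OF R \<Psi>H BH] by simp
  also have "\<dots> = A * (\<Psi>H * (R * B\<^sup>H))"
    unfolding commute using assoc_mult_mat[OF \<Psi>H R BH] by simp
  also have "\<dots> = (A * \<Psi>H) * (R * B\<^sup>H)"
    using assoc_mult_mat[OF A \<Psi>H mult_carrier_mat[OF R BH]] by simp
  finally show ?thesis unfolding R_def \<Psi>H_def .
qed

lemma xcorr_stacked_subarrays_factor:
  fixes zx zz :: "nat \<Rightarrow> complex" and w :: "'w \<Rightarrow> nat \<Rightarrow> complex"
  assumes int: "\<forall>i<M. \<forall>j<M. integrable P (\<lambda>\<omega>. w \<omega> i * cnj (w \<omega> j))"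
    and uncorr: "\<forall>i<M. \<forall>j<M. i \<noteq> j \<longrightarrow> integral\<^sup>L P (\<lambda>\<omega>. w \<omega> i * cnj (w \<omega> j)) = 0"
  shows
    "xcorr P (N - 1) (N - 1) (\<lambda>\<omega>. first_entries (vandermonde_mat N M zx *\<^sub>v vec M (w \<omega>)))
        (\<lambda>\<omega>. first_entries (vandermonde_mat N M zz *\<^sub>v vec M (w \<omega>)))
     @\<^sub>r xcorr P (N - 1) (N - 1) (\<lambda>\<omega>. last_entries (vandermonde_mat N M zx *\<^sub>v vec M (w \<omega>)))
        (\<lambda>\<omega>. first_entries (vandermonde_mat N M zz *\<^sub>v vec M (w \<omega>)))
     @\<^sub>r xcorr P (N - 1) (N - 1) (\<lambda>\<omega>. first_entries (vandermonde_mat N M zx *\<^sub>v vec M (w \<omega>)))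
        (\<lambda>\<omega>. last_entries (vandermonde_mat N M zz *\<^sub>v vec M (w \<omega>)))
   = (vandermonde_mat (N - 1) M zx
       @\<^sub>r vandermonde_mat (N - 1) M zx * mat_diag M zx
       @\<^sub>r vandermonde_mat (N - 1) M zx * (mat_diag M zz)\<^sup>H)
     * (mat_diag M (\<lambda>i. integral\<^sup>L P (\<lambda>\<omega>. w \<omega> i * cnj (w \<omega> i))) * (vandermonde_mat (N - 1) M zz)\<^sup>H)"
proof -
  define Ax1 Az1 where "Ax1 = vandermonde_mat (N - 1) M zx" and "Az1 = vandermonde_mat (N - 1) M zz"
  define Rw where "Rw = mat_diag M (\<lambda>i. integral\<^sup>L P (\<lambda>\<omega>. w \<omega> i * cnj (w \<omega> i)))"
  define \<Phi> \<Psi> where "\<Phi> = mat_diag M zx" and "\<Psi> = mat_diag M zz"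
  have Ax1: "Ax1 \<in> carrier_mat (N - 1) M" and Az1: "Az1 \<in> carrier_mat (N - 1) M"
    and Rw: "Rw \<in> carrier_mat M M" and \<Phi>: "\<Phi> \<in> carrier_mat M M" and \<Psi>H: "\<Psi>\<^sup>H \<in> carrier_mat M M"
    by (simp_all add: Ax1_def Az1_def Rw_def \<Phi>_def \<Psi>_def)
  have Ax1\<Phi>: "Ax1 * \<Phi> \<in> carrier_mat (N - 1) M" and Ax1\<Psi>H: "Ax1 * \<Psi>\<^sup>H \<in> carrier_mat (N - 1) M"
    and Az1\<Psi>: "Az1 * \<Psi> \<in> carrier_mat (N - 1) M" and RwAz1H: "Rw * Az1\<^sup>H \<in> carrier_mat M (N - 1)"
    using Ax1 Az1 Rw \<Phi> \<Psi>H by (auto simp: \<Psi>_def)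
  have cov: "xcorr P M M (\<lambda>\<omega>. vec M (w \<omega>)) (\<lambda>\<omega>. vec M (w \<omega>)) = Rw"
    unfolding Rw_def by (rule xcorr_uncorrelated[OF uncorr])
  note xcorr = xcorr_mult_mat_vec[OF _ _ int, unfolded cov]
  have R1: "xcorr P (N - 1) (N - 1) (\<lambda>\<omega>. Ax1 *\<^sub>v vec M (w \<omega>)) (\<lambda>\<omega>. Az1 *\<^sub>v vec M (w \<omega>))
      = Ax1 * (Rw * Az1\<^sup>H)"
    using xcorr[OF Ax1 Az1] assoc_mult_mat[OF Ax1 Rw adj_carrier_mat[OF Az1]] by simp
  have R2: "xcorr P (N - 1) (N - 1) (\<lambda>\<omega>. (Ax1 * \<Phi>) *\<^sub>v vec M (w \<omega>)) (\<lambda>\<omega>. Az1 *\<^sub>v vec M (w \<omega>))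
      = (Ax1 * \<Phi>) * (Rw * Az1\<^sup>H)"
    using xcorr[OF Ax1\<Phi> Az1] assoc_mult_mat[OF Ax1\<Phi> Rw adj_carrier_mat[OF Az1]] by simp
  have R3: "xcorr P (N - 1) (N - 1) (\<lambda>\<omega>. Ax1 *\<^sub>v vec M (w \<omega>)) (\<lambda>\<omega>. (Az1 * \<Psi>) *\<^sub>v vec M (w \<omega>))
      = (Ax1 * \<Psi>\<^sup>H) * (Rw * Az1\<^sup>H)"
    using xcorr[OF Ax1 Az1\<Psi>] mult_diag_mult_adj_mult_diag[OF Ax1 Az1] by (simp add: Rw_def \<Psi>_def)
  show ?thesis
    unfolding first_entries_mult_mat_vec last_entries_mult_mat_vec first_rows_vandermonde_mat
      last_rows_vandermonde_mat Ax1_def[symmetric] Az1_def[symmetric] Rw_def[symmetric]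
      \<Phi>_def[symmetric] \<Psi>_def[symmetric] R1 R2 R3
    using append_rows_mult[OF Ax1 carrier_append_rows[OF Ax1\<Phi> Ax1\<Psi>H] RwAz1H]
      append_rows_mult[OF Ax1\<Phi> Ax1\<Psi>H RwAz1H] by simp
qed

theorem lemma2:
  fixes N M :: nat and d c f_Nyq B :: real and f \<theta> :: "nat \<Rightarrow> real"
    and P :: "'w measure" and w :: "'w \<Rightarrow> nat \<Rightarrow> complex" and U1 :: "complex mat"
  assumes c_pos: "c > 0" and d_pos: "d > 0" and fNyq_pos: "f_Nyq > 0"
    and f_band: "\<forall>i<M. \<bar>f i\<bar> \<le> f_Nyq / 2"
    and f_sep: "\<forall>i<M. \<forall>j<M. i \<noteq> j \<longrightarrow> \<bar>f i - f j\<bar> > B"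
    and angles: "\<forall>i<M. \<bar>\<theta> i\<bar> < pi / 2"
    and distinct_x: "\<forall>i<M. \<forall>j<M. i \<noteq> j \<longrightarrow> f i * cos (\<theta> i) \<noteq> f j * cos (\<theta> j)"
    and distinct_z: "\<forall>i<M. \<forall>j<M. i \<noteq> j \<longrightarrow> f i * sin (\<theta> i) \<noteq> f j * sin (\<theta> j)"
    and prob: "prob_space P"
    and w_int: "\<forall>i<M. \<forall>j<M. integrable P (\<lambda>\<omega>. w \<omega> i * cnj (w \<omega> j))"
    and Rw_diag: "\<forall>i<M. \<forall>j<M. i \<noteq> j \<longrightarrow> integral\<^sup>L P (\<lambda>\<omega>. w \<omega> i * cnj (w \<omega> j)) = 0"
    and Rw_nonzero: "\<forall>i<M. integral\<^sup>L P (\<lambda>\<omega>. w \<omega> i * cnj (w \<omega> i)) \<noteq> 0"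
    and c1: "d \<le> c / f_Nyq"
    and c2: "N > M"
    and U1: "leading_left_singular_vectors
       (let Ax = steer_x N M d c f \<theta>; Az = steer_z N M d c f \<theta>;
            x = (\<lambda>\<omega>. Ax *\<^sub>v vec M (w \<omega>)); z = (\<lambda>\<omega>. Az *\<^sub>v vec M (w \<omega>));
            x1 = (\<lambda>\<omega>. first_entries (x \<omega>)); x2 = (\<lambda>\<omega>. last_entries (x \<omega>));
            z1 = (\<lambda>\<omega>. first_entries (z \<omega>)); z2 = (\<lambda>\<omega>. last_entries (z \<omega>));
            R1 = xcorr P (N - 1) (N - 1) x1 z1;
            R2 = xcorr P (N - 1) (N - 1) x2 z1;
            R3 = xcorr P (N - 1) (N - 1) x1 z2
        in R1 @\<^sub>r R2 @\<^sub>r R3) M U1"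
  shows "\<exists>T. T \<in> carrier_mat M M \<and> invertible_mat T \<and>
    U1 = (let Ax1 = first_rows (steer_x N M d c f \<theta>) in
          (Ax1 @\<^sub>r (Ax1 * Phi_mat M d c f \<theta>) @\<^sub>r (Ax1 * (Psi_mat M d c f \<theta>)\<^sup>H)) * T)"
proof -
  define zx zz where "zx = phasor_x d c f \<theta>" and "zz = phasor_z d c f \<theta>"
  define G where "G = vandermonde_mat (N - 1) M zx
    @\<^sub>r vandermonde_mat (N - 1) M zx * mat_diag M zx @\<^sub>r vandermonde_mat (N - 1) M zx * (mat_diag M zz)\<^sup>H"
  define Q where "Q = mat_diag M (\<lambda>i. integral\<^sup>L P (\<lambda>\<omega>. w \<omega> i * cnj (w \<omega> i))) * (vandermonde_mat (N - 1) M zz)\<^sup>H"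
  have "M \<le> N - 1" using c2 by simp
  have G: "G \<in> carrier_mat (N - 1 + (N - 1 + (N - 1))) M"
    unfolding G_def by (intro carrier_append_rows mult_carrier_mat) auto
  have Q: "Q \<in> carrier_mat M (N - 1)"
    unfolding Q_def by (intro mult_carrier_mat) auto
  have "leading_left_singular_vectors (G * Q) M U1"
    using U1 unfolding Let_def steer_x_eq_vandermonde_mat steer_z_eq_vandermonde_mat
      xcorr_stacked_subarrays_factor[OF w_int Rw_diag] G_def Q_def zx_def zz_def .
  moreover have "det (rect_id M (N - 1 + (N - 1 + (N - 1))) * G) \<noteq> 0"
    unfolding G_def zx_def
    using inj_on_phasor_x[OF c_pos d_pos fNyq_pos f_band angles c1 distinct_x distinct_z]
    by (intro det_rect_id_mult_stacked_vandermonde_nonzero[OF \<open>M \<le> N - 1\<close>])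
      (auto simp: phasor_x_def intro!: carrier_append_rows mult_carrier_mat)
  moreover have "det (Q * rect_id (N - 1) M) \<noteq> 0"
    unfolding Q_def zz_def
    using inj_on_phasor_z[OF c_pos d_pos fNyq_pos f_band angles c1 distinct_z] Rw_nonzero
    by (intro det_diag_mult_adj_vandermonde_nonzero[OF \<open>M \<le> N - 1\<close>]) (auto simp: phasor_z_def)
  ultimately obtain T where "T \<in> carrier_mat M M" "invertible_mat T" "U1 = G * T"
    using leading_left_singular_vectors_factor[OF G Q rect_id_carrier_mat _ rect_id_carrier_mat] by blast
  then show ?thesis
    unfolding Let_def steer_x_eq_vandermonde_mat first_rows_vandermonde_mat Phi_mat_eq_mat_diag
      Psi_mat_eq_mat_diag G_def zx_def zz_def by blast
qed

end
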